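(* Let $\mathbf{X}$ be either an $N$-sgrm over $\mathbb{R}^d$, or a good sgrm with $\dot{\mathbf{X}}_{s,s}\in\mathcal{L}^N(\mathbb{R}^d)$ for all $s$, and let $\mathfrak{B}^N$ be an orthonormal basis of $\mathcal{L}^N(\mathbb{R}^d)\subset T^N(\mathbb{R}^d)$. Then a smooth path $Y:[0,T]\to\mathbb{R}^e$ solves $dY=f(Y)\,d\mathbf{X}$ if and only if $$\dot Y_s=\sum_{\mathfrak{u}\in\mathfrak{B}^N}f_{\mathfrak{u}}(Y_s)\langle\dot{\mathbf{X}}_{s,s},\mathfrak{u}\rangle\quad\text{for all }s\in[0,T].$$
   Context: Fix $T>0$, $d,e\ge1$. $T((\mathbb{R}^d))$: formal tensor series over words in $\{1,\dots,d\}$ (incl. empty word $\mathbf{1}$), concatenation $\otimes$; $T^N(\mathbb{R}^d)$: span of words of length $\le N$ with truncated product $\otimes_N$, projection $\mathrm{proj}_N$; $\langle\mathbf{x},w\rangle$ the coefficient of $w$, extended bilinearly; $T^N(\mathbb{R}^d)$ carries the inner product making words orthonormal. Shuffle: bilinear, unit $\mathbf{1}$, $wi\sqcup\!\sqcup vj=(w\sqcup\!\sqcup vj)i+(wi\sqcup\!\sqcup v)j$. $\mathcal{L}(\mathbb{R}^d)$: Lie polynomials generated by the letters; $\mathcal{L}^N(\mathbb{R}^d)=\mathrm{proj}_N\mathcal{L}(\mathbb{R}^d)$. $N$-sgrm: non-zero $\mathbf{X}:[0,T]^2\to T^N(\mathbb{R}^d)$ with the shuffle relation $\langle\mathbf{X}_{s,t},v\sqcup\!\sqcup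 w\rangle=\langle\mathbf{X}_{s,t},v\rangle\langle\mathbf{X}_{s,t},w\rangle$ ($|v|+|w|\le N$), Chen's relation $\mathbf{X}_{s,u}\otimes_N\mathbf{X}_{u,t}=\mathbf{X}_{s,t}$, and smooth $t\mapsto\langle\mathbf{X}_{s,t},w\rangle$; sgrm: same in $T((\mathbb{R}^d))$ for all words with $\otimes$. Diagonal derivative $\dot{\mathbf{X}}_{s,s}=\partial_t|_{t=s}\mathbf{X}_{s,t}$. A good sgrm is the minimal extension of some $N'$-sgrm $\mathbf{Y}$, i.e. the unique sgrm agreeing with $\mathbf{Y}$ on words of length $\le N'$ whose diagonal derivative lies in $\mathcal{L}^{N'}(\mathbb{R}^d)$. Vector fields: $(f_1,\dots,f_d)$ smooth on $\mathbb{R}^e$ with bounded derivatives; $f\vartriangleright g:=f^i(\partial_ig^j)\partial_j$; $f_{\mathbf{1}}=\mathrm{id}$, $f_{\ell_1\cdots\ell_n}:=f_{\ell_1}\vartriangleright(\cdots\vartriangleright(f_{\ell_{n-1}}\vartriangleright f_{\ell_n})\cdots)$; for $\mathbf{x}\in T(\mathbb{R}^d)$, $f_{\mathbf{x}}:=\sum_w\langle\mathbf{x},w\rangle f_w$. For such $\mathbf{X}$, "$Y$ solves $dY=f(Y)d\mathbf{X}$" means $Y$ is smooth and $\dot Y_s=\sum_{|w|\le N}f_w(Y_s)\langle\dot{\mathbf{X}}_{s,s},w\rangle$ for all $s$. *)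

theory Defs
  imports "HOL-Analysis.Analysis"
begin

text \<open>Words over the alphabet {1..d} are lists of naturals; tensor series are
functions from words to reals (supported on words over the alphabet).\<close>

definition words :: "nat \<Rightarrow> nat \<Rightarrow> nat list set" where
  "words d N = {w. set w \<subseteq> {1..d} \<and> length w \<le> N}"

definition in_T :: "nat \<Rightarrow> (nat list \<Rightarrow> real) \<Rightarrow> bool" where
  "in_T d x \<longleftrightarrow> (\<forall>w. \<not> set w \<subseteq> {1..d} \<longrightarrow> x w = 0)"

definition in_TN :: "nat \<Rightarrow> nat \<Rightarrow> (nat list \<Rightarrow> real) \<Rightarrow> bool" where
  "in_TN d N x \<longleftrightarrow> (\<forall>w. w \<notin> words d N \<longrightarrow> x w = 0)"

definition tmul :: "(nat list \<Rightarrow> real) \<Rightarrow> (nat list \<Rightarrow> real) \<Rightarrow> nat list \<Rightarrow> real" where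
  "tmul x y w = (\<Sum>i\<le>length w. x (take i w) * y (drop i w))"

definition tmulN :: "nat \<Rightarrow> (nat list \<Rightarrow> real) \<Rightarrow> (nat list \<Rightarrow> real) \<Rightarrow> nat list \<Rightarrow> real" where
  "tmulN N x y w = (if length w \<le> N then tmul x y w else 0)"

definition proj :: "nat \<Rightarrow> (nat list \<Rightarrow> real) \<Rightarrow> nat list \<Rightarrow> real" where
  "proj N x w = (if length w \<le> N then x w else 0)"

text \<open>Shuffle with multiplicities (first-letter recursion), then reversed
to obtain the last-letter recursion of the paper:
  shuffle (w@[i]) (v@[j]) = (shuffle w (v@[j]))i + (shuffle (w@[i]) v)j.\<close>
fun shf :: "nat list \<Rightarrow> nat list \<Rightarrow> nat list list" where
  "shf [] w = [w]"
| "shf v [] = [v]"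
| "shf (a # v) (b # w) = map (Cons a) (shf v (b # w)) @ map (Cons b) (shf (a # v) w)"

definition shuffle :: "nat list \<Rightarrow> nat list \<Rightarrow> nat list list" where
  "shuffle v w = map rev (shf (rev v) (rev w))"

text \<open>Pairing of a tensor with a formal sum of words (given as a list).\<close>
definition pair :: "(nat list \<Rightarrow> real) \<Rightarrow> nat list list \<Rightarrow> real" where
  "pair x ws = sum_list (map x ws)"

definition letter :: "nat \<Rightarrow> nat list \<Rightarrow> real" where
  "letter i = (\<lambda>w. if w = [i] then 1 else 0)"

inductive_set lie :: "nat \<Rightarrow> (nat list \<Rightarrow> real) set" for d where
  lie_letter: "i \<in> {1..d} \<Longrightarrow> letter i \<in> lie d"
| lie_zero: "(\<lambda>w. 0) \<in> lie d"
| lie_add: "x \<in> lie d \<Longrightarrow> y \<in> lie d \<Longrightarrow> (\<lambda>w. x w + y w) \<in> lie d"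
| lie_scale: "x \<in> lie d \<Longrightarrow> (\<lambda>w. c * x w) \<in> lie d"
| lie_bracket: "x \<in> lie d \<Longrightarrow> y \<in> lie d \<Longrightarrow> (\<lambda>w. tmul x y w - tmul y x w) \<in> lie d"

definition lieN :: "nat \<Rightarrow> nat \<Rightarrow> (nat list \<Rightarrow> real) set" where
  "lieN d N = proj N ` lie d"

definition ipN :: "nat \<Rightarrow> nat \<Rightarrow> (nat list \<Rightarrow> real) \<Rightarrow> (nat list \<Rightarrow> real) \<Rightarrow> real" where
  "ipN d N x y = (\<Sum>w\<in>words d N. x w * y w)"

definition onb_lieN :: "nat \<Rightarrow> nat \<Rightarrow> (nat list \<Rightarrow> real) set \<Rightarrow> bool" where
  "onb_lieN d N B \<longleftrightarrow> finite B \<and> B \<subseteq> lieN d N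
     \<and> (\<forall>u\<in>B. \<forall>v\<in>B. ipN d N u v = (if u = v then 1 else 0))
     \<and> (\<forall>x\<in>lieN d N. \<exists>c. x = (\<lambda>w. \<Sum>u\<in>B. c u * u w))"

definition smooth_on :: "real set \<Rightarrow> (real \<Rightarrow> 'a::real_normed_vector) \<Rightarrow> bool" where
  "smooth_on S g \<longleftrightarrow> (\<exists>D :: nat \<Rightarrow> real \<Rightarrow> 'a. (\<forall>x\<in>S. D 0 x = g x) \<and>
      (\<forall>k. \<forall>x\<in>S. (D k has_vector_derivative D (Suc k) x) (at x within S)))"

text \<open>Smooth vector field with bounded derivatives (of all orders \<ge> 1):
D vs y is the iterated derivative of g at y in the directions vs.\<close>
definition smooth_bdd_field :: "('a::euclidean_space \<Rightarrow> 'a) \<Rightarrow> bool" where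
  "smooth_bdd_field g \<longleftrightarrow> (\<exists>D :: 'a list \<Rightarrow> 'a \<Rightarrow> 'a. D [] = g \<and>
      (\<forall>vs y. (D vs has_derivative (\<lambda>v. D (v # vs) y)) (at y)) \<and>
      (\<forall>vs. vs \<noteq> [] \<longrightarrow> bounded (range (D vs))))"

definition Nsgrm :: "nat \<Rightarrow> nat \<Rightarrow> real \<Rightarrow> (real \<Rightarrow> real \<Rightarrow> nat list \<Rightarrow> real) \<Rightarrow> bool" where
  "Nsgrm d N T X \<longleftrightarrow>
     (\<exists>s\<in>{0..T}. \<exists>t\<in>{0..T}. X s t \<noteq> (\<lambda>w. 0))
   \<and> (\<forall>s\<in>{0..T}. \<forall>t\<in>{0..T}. in_TN d N (X s t))
   \<and> (\<forall>s\<in>{0..T}. \<forall>t\<in>{0..T}. \<forall>v w. set v \<subseteq> {1..d} \<longrightarrow> set w \<subseteq> {1..d} \<longrightarrow>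
        length v + length w \<le> N \<longrightarrow> pair (X s t) (shuffle v w) = X s t v * X s t w)
   \<and> (\<forall>s\<in>{0..T}. \<forall>u\<in>{0..T}. \<forall>t\<in>{0..T}. tmulN N (X s u) (X u t) = X s t)
   \<and> (\<forall>s\<in>{0..T}. \<forall>w. smooth_on {0..T} (\<lambda>t. X s t w))"

definition sgrm :: "nat \<Rightarrow> real \<Rightarrow> (real \<Rightarrow> real \<Rightarrow> nat list \<Rightarrow> real) \<Rightarrow> bool" where
  "sgrm d T X \<longleftrightarrow>
     (\<exists>s\<in>{0..T}. \<exists>t\<in>{0..T}. X s t \<noteq> (\<lambda>w. 0))
   \<and> (\<forall>s\<in>{0..T}. \<forall>t\<in>{0..T}. in_T d (X s t))
   \<and> (\<forall>s\<in>{0..T}. \<forall>t\<in>{0..T}. \<forall>v w. set v \<subseteq> {1..d} \<longrightarrow> set w \<subseteq> {1..d} \<longrightarrow>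
        pair (X s t) (shuffle v w) = X s t v * X s t w)
   \<and> (\<forall>s\<in>{0..T}. \<forall>u\<in>{0..T}. \<forall>t\<in>{0..T}. tmul (X s u) (X u t) = X s t)
   \<and> (\<forall>s\<in>{0..T}. \<forall>w. smooth_on {0..T} (\<lambda>t. X s t w))"

definition diag_deriv :: "real \<Rightarrow> (real \<Rightarrow> real \<Rightarrow> nat list \<Rightarrow> real) \<Rightarrow> real \<Rightarrow> nat list \<Rightarrow> real" where
  "diag_deriv T X s = (\<lambda>w. vector_derivative (\<lambda>t. X s t w) (at s within {0..T}))"

text \<open>Good sgrm: minimal extension of some N'-sgrm Y, i.e. an sgrm agreeing
with Y on words of length \<le> N' whose diagonal derivative lies in L^{N'}.\<close>
definition good_sgrm :: "nat \<Rightarrow> real \<Rightarrow> (real \<Rightarrow> real \<Rightarrow> nat list \<Rightarrow> real) \<Rightarrow> bool" where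
  "good_sgrm d T X \<longleftrightarrow> sgrm d T X \<and>
     (\<exists>N' Y. Nsgrm d N' T Y
        \<and> (\<forall>s\<in>{0..T}. \<forall>t\<in>{0..T}. \<forall>w. length w \<le> N' \<longrightarrow> X s t w = Y s t w)
        \<and> (\<forall>s\<in>{0..T}. diag_deriv T X s \<in> lieN d N'))"

definition vf_act :: "('a::euclidean_space \<Rightarrow> 'a) \<Rightarrow> ('a \<Rightarrow> 'a) \<Rightarrow> 'a \<Rightarrow> 'a" where
  "vf_act f g = (\<lambda>y. frechet_derivative g (at y) (f y))"

fun fw :: "(nat \<Rightarrow> 'a::euclidean_space \<Rightarrow> 'a) \<Rightarrow> nat list \<Rightarrow> 'a \<Rightarrow> 'a" where
  "fw f [] = id"
| "fw f [l] = f l"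
| "fw f (l # v # w) = vf_act (f l) (fw f (v # w))"

definition fx :: "(nat \<Rightarrow> 'a::euclidean_space \<Rightarrow> 'a) \<Rightarrow> nat \<Rightarrow> nat \<Rightarrow> (nat list \<Rightarrow> real) \<Rightarrow> 'a \<Rightarrow> 'a" where
  "fx f d N x y = (\<Sum>w\<in>words d N. x w *\<^sub>R fw f w y)"

definition solves :: "real \<Rightarrow> nat \<Rightarrow> nat \<Rightarrow> (nat \<Rightarrow> 'a::euclidean_space \<Rightarrow> 'a)
    \<Rightarrow> (real \<Rightarrow> real \<Rightarrow> nat list \<Rightarrow> real) \<Rightarrow> (real \<Rightarrow> 'a) \<Rightarrow> bool" where
  "solves T d N f X Y \<longleftrightarrow> smooth_on {0..T} Y \<and>
     (\<forall>s\<in>{0..T}. vector_derivative Y (at s within {0..T})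
        = (\<Sum>w\<in>words d N. diag_deriv T X s w *\<^sub>R fw f w (Y s)))"

end

theory Submission
  imports Defs
begin

(* Expanding x = d/dt X_{s,t} at t = s in the orthonormal basis B turns the sum over words
   into the sum over B, provided x coincides on words of length <= N with an element of L^N.
   For a good sgrm this is assumed. For an N-sgrm, Chen's relation forces X_{s,s} = 1, so
   differentiating the shuffle relation at t = s shows that x is primitive: it vanishes on
   the empty word and on every shuffle v sh w of nonempty words. Such an x is a Lie element by
   Friedrichs' criterion, proved here with Dynkin's map: the coefficients of the left-normed
   bracket [..[w_1,w_2],..,w_n] are alternating sums over the split shuffles
   rev(z_1..z_k) sh z_{k+1}..z_n, which the antipode identity of the shuffle Hopf algebra
   controls. *)

section \<open>Shuffles\<close>

lemma count_list_map_Cons: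
  "count_list (map (Cons a) L) (c # y) = (if a = c then count_list L y else 0)"
  by (induction L) auto

lemma count_list_map_rev: "count_list (map rev L) y = count_list L (rev y)"
  by (induction L) auto

lemma shf_Nil_right [simp]: "shf v [] = [v]"
  by (cases v) auto

lemma count_list_shf_Nil: "count_list (shf p q) [] = (if p = [] \<and> q = [] then 1 else 0)"
  by (induction p q rule: shf.induct) (auto simp: count_list_0_iff split: list.split)

lemma count_list_shf_Cons: "count_list (shf p q) (c # y) =
   (if p \<noteq> [] \<and> hd p = c then count_list (shf (tl p) q) y else 0) +
   (if q \<noteq> [] \<and> hd q = c then count_list (shf p (tl q)) y else 0)"
  by (cases "(p, q)" rule: shf.cases) (auto simp: count_list_map_Cons)

lemma shuffle_Nil_left [simp]: "shuffle [] w = [w]"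
  by (simp add: shuffle_def)

lemma count_list_shuffle_Nil: "count_list (shuffle u v) [] = (if u = [] \<and> v = [] then 1 else 0)"
  by (simp add: shuffle_def count_list_map_rev count_list_shf_Nil)

lemma count_list_shuffle_snoc: "count_list (shuffle u v) (w @ [a]) =
   (if u \<noteq> [] \<and> last u = a then count_list (shuffle (butlast u) v) w else 0) +
   (if v \<noteq> [] \<and> last v = a then count_list (shuffle u (butlast v)) w else 0)"
proof -
  have tl_rev: "tl (rev xs) = rev (butlast xs)" for xs :: "nat list"
    by (metis butlast_rev rev_rev_ident)
  show ?thesis
    unfolding shuffle_def count_list_map_rev rev_append
    by (simp add: count_list_shf_Cons hd_rev tl_rev)
qed

lemma in_set_shf: "x \<in> set (shf p q) \<Longrightarrow> length x = length p + length q \<and> set x \<subseteq> set p \<union> set q"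
  by (induction p q arbitrary: x rule: shf.induct) fastforce+

lemma in_set_shuffle: "x \<in> set (shuffle p q) \<Longrightarrow> length x = length p + length q \<and> set x \<subseteq> set p \<union> set q"
  unfolding shuffle_def using in_set_shf[of "rev x" "rev p" "rev q"] by auto

definition split_shuffle :: "nat \<Rightarrow> nat list \<Rightarrow> nat list list" where
  "split_shuffle k z = shuffle (rev (take k z)) (drop k z)"

lemma split_shuffle_0 [simp]: "split_shuffle 0 z = [z]"
  by (simp add: split_shuffle_def shuffle_def)

lemma in_set_split_shuffle:
  "k \<le> length z \<Longrightarrow> y \<in> set (split_shuffle k z) \<Longrightarrow> length y = length z \<and> set y \<subseteq> set z"
  unfolding split_shuffle_def using in_set_shuffle set_take_subset set_drop_subset by fastforce

lemma count_list_split_shuffle_Nil: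
  "k \<le> length z \<Longrightarrow> count_list (split_shuffle k z) [] = (if k = 0 \<and> z = [] then 1 else 0)"
  unfolding split_shuffle_def count_list_shuffle_Nil by auto

lemma count_list_split_shuffle_snoc:
  assumes "z \<noteq> []" "k \<le> length z"
  shows "count_list (split_shuffle k z) (w @ [a]) =
    (if 1 \<le> k \<and> hd z = a then count_list (split_shuffle (k - 1) (tl z)) w else 0) +
    (if k < length z \<and> last z = a then count_list (split_shuffle k (butlast z)) w else 0)"
proof -
  have "(rev (take k z) \<noteq> [] \<and> last (rev (take k z)) = a) = (1 \<le> k \<and> hd z = a)"
    and "1 \<le> k \<Longrightarrow> butlast (rev (take k z)) = rev (take (k - 1) (tl z))"
    and "1 \<le> k \<Longrightarrow> drop (k - 1) (tl z) = drop k z"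
    using assms by (cases z; cases k; simp)+
  moreover have "(drop k z \<noteq> [] \<and> last (drop k z) = a) = (k < length z \<and> last z = a)"
    and "k < length z \<Longrightarrow> butlast (drop k z) = drop k (butlast z) \<and> take k z = take k (butlast z)"
    using assms by (auto simp: butlast_drop take_butlast)
  ultimately show ?thesis
    unfolding split_shuffle_def count_list_shuffle_snoc by (auto simp del: rev_is_Nil_conv)
qed

lemma sum_count_list_split_shuffle_snoc:
  fixes g :: "nat \<Rightarrow> real"
  assumes "z \<noteq> []"
  shows "(\<Sum>k\<le>length z. g k * count_list (split_shuffle k z) (w @ [a])) =
    (if hd z = a
     then (\<Sum>k\<le>length z - 1. g (Suc k) * count_list (split_shuffle k (tl z)) w) else 0) +
    (if last z = a
     then (\<Sum>k\<le>length z - 1. g k * count_list (split_shuffle k (butlast z)) w) else 0)"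
proof -
  obtain m where m: "length z = Suc m" using assms by (cases z) auto
  have "(\<Sum>k\<le>length z. g k * count_list (split_shuffle k z) (w @ [a])) =
    (\<Sum>k\<le>Suc m. g k * (if 1 \<le> k \<and> hd z = a then count_list (split_shuffle (k - 1) (tl z)) w else 0)) +
    (\<Sum>k\<le>Suc m. g k * (if k < Suc m \<and> last z = a then count_list (split_shuffle k (butlast z)) w else 0))"
    unfolding m[symmetric] sum.distrib[symmetric]
    by (rule sum.cong) (auto simp: count_list_split_shuffle_snoc[OF assms] distrib_left)
  also have "(\<Sum>k\<le>Suc m. g k * (if 1 \<le> k \<and> hd z = a then count_list (split_shuffle (k - 1) (tl z)) w else 0))
     = (if hd z = a then (\<Sum>k\<le>m. g (Suc k) * count_list (split_shuffle k (tl z)) w) else 0)"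
    unfolding sum.atMost_Suc_shift by (auto intro: sum.cong)
  also have "(\<Sum>k\<le>Suc m. g k * (if k < Suc m \<and> last z = a then count_list (split_shuffle k (butlast z)) w else 0))
     = (if last z = a then (\<Sum>k\<le>m. g k * count_list (split_shuffle k (butlast z)) w) else 0)"
    unfolding sum.atMost_Suc by (auto intro: sum.cong)
  finally show ?thesis using m by simp
qed

(* The antipode identity of the shuffle Hopf algebra, read off coefficientwise. *)
lemma split_shuffle_alternating_count:
  "(\<Sum>k\<le>length z. (-1::real) ^ k * count_list (split_shuffle k z) w) = (if z = [] \<and> w = [] then 1 else 0)"
proof (induction w arbitrary: z rule: rev_induct)
  case Nil
  show ?case by (simp add: count_list_split_shuffle_Nil if_distrib cong: if_cong)
next
  case (snoc a w)
  show ?case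
  proof (cases "z = []")
    case True
    then show ?thesis by (simp add: split_shuffle_def shuffle_def)
  next
    case False
    then show ?thesis
      using sum_count_list_split_shuffle_snoc[OF False, of "\<lambda>k. (-1::real) ^ k"]
        snoc.IH[of "tl z"] snoc.IH[of "butlast z"]
      by (cases z) (auto simp: sum_negf butlast_conv_take)
  qed
qed

section \<open>Dynkin's map and Friedrichs' criterion\<close>

lemma tmul_Nil [simp]: "tmul x y [] = x [] * y []"
  by (simp add: tmul_def)

lemma pair_singleton [simp]: "pair x [w] = x w"
  by (simp add: pair_def)

lemma finite_words: "finite (words d N)"
  unfolding words_def by (rule finite_lists_length_le) simp

lemma drop_eq_singleton_iff:
  assumes "i \<le> length z"
  shows "drop i z = [a] \<longleftrightarrow> z \<noteq> [] \<and> i = length z - 1 \<and> last z = a"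
proof
  assume h: "drop i z = [a]"
  then have "length z - i = 1" by (metis length_drop length_Cons list.size(3) One_nat_def)
  moreover have "last (drop i z) = a" using h by simp
  ultimately show "z \<noteq> [] \<and> i = length z - 1 \<and> last z = a" using assms by (auto simp: last_drop)
next
  show "z \<noteq> [] \<and> i = length z - 1 \<and> last z = a \<Longrightarrow> drop i z = [a]"
    by (cases z rule: rev_exhaust) auto
qed

lemma take_eq_singleton_iff:
  "i \<le> length z \<Longrightarrow> take i z = [a] \<longleftrightarrow> z \<noteq> [] \<and> i = 1 \<and> hd z = a"
  by (cases z; cases i) auto

lemma tmul_letter_right: "tmul y (letter a) z = (if z \<noteq> [] \<and> last z = a then y (butlast z) else 0)"
proof -
  have "tmul y (letter a) z = (\<Sum>i\<le>length z. if i = length z - 1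
      then (if z \<noteq> [] \<and> last z = a then y (take i z) else 0) else 0)"
    unfolding tmul_def letter_def by (intro sum.cong refl) (auto simp: drop_eq_singleton_iff)
  then show ?thesis by (simp add: butlast_conv_take)
qed

lemma tmul_letter_left: "tmul (letter a) y z = (if z \<noteq> [] \<and> hd z = a then y (tl z) else 0)"
proof -
  have "tmul (letter a) y z = (\<Sum>i\<le>length z. if i = 1
      then (if z \<noteq> [] \<and> hd z = a then y (drop i z) else 0) else 0)"
    unfolding tmul_def letter_def by (intro sum.cong refl) (auto simp: take_eq_singleton_iff)
  then show ?thesis unfolding sum.delta[OF finite_atMost] by (cases z) auto
qed

definition tbracket :: "(nat list \<Rightarrow> real) \<Rightarrow> (nat list \<Rightarrow> real) \<Rightarrow> nat list \<Rightarrow> real" where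
  "tbracket x y = (\<lambda>z. tmul x y z - tmul y x z)"

fun left_bracket :: "nat list \<Rightarrow> nat list \<Rightarrow> real" where
  "left_bracket [] = (\<lambda>_. 0)"
| "left_bracket (a # u) = foldl (\<lambda>y b. tbracket y (letter b)) (letter a) u"

lemma left_bracket_snoc: "w \<noteq> [] \<Longrightarrow> left_bracket (w @ [a]) = tbracket (left_bracket w) (letter a)"
  by (cases w) auto

lemma tbracket_in_lie: "x \<in> lie d \<Longrightarrow> y \<in> lie d \<Longrightarrow> tbracket x y \<in> lie d"
  by (simp add: tbracket_def lie_bracket)

lemma left_bracket_in_lie: "set w \<subseteq> {1..d} \<Longrightarrow> left_bracket w \<in> lie d"
proof (induction w rule: rev_induct)
  case (snoc a w)
  then show ?case
    by (cases "w = []") (simp_all add: left_bracket_snoc tbracket_in_lie lie_letter)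
qed (auto intro: lie.intros)

lemma sum_in_lie:
  "finite A \<Longrightarrow> (\<And>a. a \<in> A \<Longrightarrow> g a \<in> lie d) \<Longrightarrow> (\<lambda>z. \<Sum>a\<in>A. c a * g a z) \<in> lie d"
proof (induction A rule: finite_induct)
  case empty
  then show ?case using lie_zero by simp
next
  case (insert a A)
  then have "(\<lambda>z. c a * g a z + (\<Sum>a\<in>A. c a * g a z)) \<in> lie d"
    using lie_add lie_scale by blast
  then show ?case using insert by simp
qed

lemma left_bracket_coeff:
  "left_bracket w z =
     (\<Sum>k\<le>length z. (-1::real) ^ k * real (length z - k) * count_list (split_shuffle k z) w)"
  (is "_ = ?c w z")
proof (induction w arbitrary: z rule: rev_induct)
  case Nil
  show ?case by (simp add: count_list_split_shuffle_Nil if_distrib cong: if_cong)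
next
  case (snoc a w)
  show ?case
  proof (cases "z = []")
    case True
    then show ?thesis
      by (cases "w = []") (simp_all add: left_bracket_snoc tbracket_def
          tmul_letter_left tmul_letter_right, simp add: letter_def)
  next
    case zne: False
    have tl_part: "(\<Sum>k\<le>length z - 1. (-1::real) ^ Suc k * real (length z - Suc k)
        * count_list (split_shuffle k (tl z)) w) = - ?c w (tl z)"
      by (simp add: sum_negf[symmetric])
    have weight: "real (length z - k) = real (length (butlast z) - k) + 1"
      if "k \<in> {..length z - 1}" for k
      using that zne by (cases z) auto
    have "(\<Sum>k\<le>length z - 1. (-1::real) ^ k * real (length z - k)
        * count_list (split_shuffle k (butlast z)) w)
      = (\<Sum>k\<le>length z - 1. (-1::real) ^ k * real (length (butlast z) - k)
          * count_list (split_shuffle k (butlast z)) w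
        + (-1::real) ^ k * count_list (split_shuffle k (butlast z)) w)"
      by (intro sum.cong refl) (simp only: weight ring_distribs mult_1_right)
    then have butlast_part: "(\<Sum>k\<le>length z - 1. (-1::real) ^ k * real (length z - k)
        * count_list (split_shuffle k (butlast z)) w)
      = ?c w (butlast z) + (if butlast z = [] \<and> w = [] then 1 else 0)"
      unfolding sum.distrib length_butlast[symmetric] split_shuffle_alternating_count by simp
    have coeff: "?c (w @ [a]) z = (if last z = a then left_bracket w (butlast z)
        + (if butlast z = [] \<and> w = [] then 1 else 0) else 0)
        - (if hd z = a then left_bracket w (tl z) else 0)"
      using sum_count_list_split_shuffle_snoc[OF zne,
          where g = "\<lambda>k. (-1::real) ^ k * real (length z - k)" and w = w and a = a]
      unfolding tl_part butlast_part snoc.IH by simp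
    show ?thesis
    proof (cases "w = []")
      case True
      moreover have "z = [a] \<longleftrightarrow> butlast z = [] \<and> last z = a"
        using zne by (cases z rule: rev_exhaust) auto
      ultimately show ?thesis using coeff by (simp add: letter_def)
    next
      case False
      then show ?thesis using coeff zne
        by (simp add: left_bracket_snoc tbracket_def tmul_letter_left tmul_letter_right)
    qed
  qed
qed

lemma sum_count_list_mult:
  fixes h :: "'a \<Rightarrow> 'b::semiring_1"
  shows "finite W \<Longrightarrow> set L \<subseteq> W \<Longrightarrow> (\<Sum>w\<in>W. of_nat (count_list L w) * h w) = sum_list (map h L)"
proof (induction L)
  case (Cons a L)
  have "(\<Sum>w\<in>W. of_nat (count_list (a # L) w) * h w)
      = (\<Sum>w\<in>W. of_nat (count_list L w) * h w) + (\<Sum>w\<in>W. if a = w then h w else 0)"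
    by (subst sum.distrib[symmetric]) (rule sum.cong; simp add: distrib_right add.commute)
  then show ?case using Cons by (simp add: add.commute)
qed simp

lemma sum_left_bracket_apply:
  assumes "finite W" "\<And>k. k \<le> length z \<Longrightarrow> set (split_shuffle k z) \<subseteq> W"
  shows "(\<Sum>w\<in>W. c w * left_bracket w z) =
    (\<Sum>k\<le>length z. (-1) ^ k * real (length z - k) * pair c (split_shuffle k z))"
proof -
  have "(\<Sum>w\<in>W. c w * left_bracket w z) = (\<Sum>k\<le>length z. (-1) ^ k * real (length z - k)
      * (\<Sum>w\<in>W. real (count_list (split_shuffle k z) w) * c w))"
    unfolding left_bracket_coeff sum_distrib_left
    by (subst sum.swap) (simp add: ac_simps)
  also have "\<dots> = (\<Sum>k\<le>length z. (-1) ^ k * real (length z - k) * pair c (split_shuffle k z))"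
    unfolding pair_def
    by (intro sum.cong refl) (simp add: sum_count_list_mult[OF assms(1) assms(2)])
  finally show ?thesis .
qed

definition primitive_upto :: "nat \<Rightarrow> nat \<Rightarrow> (nat list \<Rightarrow> real) \<Rightarrow> bool" where
  "primitive_upto d N x \<longleftrightarrow> x [] = 0 \<and>
     (\<forall>v w. v \<noteq> [] \<longrightarrow> w \<noteq> [] \<longrightarrow> set v \<subseteq> {1..d} \<longrightarrow> set w \<subseteq> {1..d} \<longrightarrow>
        length v + length w \<le> N \<longrightarrow> pair x (shuffle v w) = 0)"

lemma split_shuffle_subset_words:
  "z \<in> words d N \<Longrightarrow> k \<le> length z \<Longrightarrow> set (split_shuffle k z) \<subseteq> words d N"
  using in_set_split_shuffle unfolding words_def by fastforce

lemma pair_split_shuffle_primitive: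
  assumes "primitive_upto d N x" "z \<in> words d N" "0 < k" "k < length z"
  shows "pair x (split_shuffle k z) = 0"
proof -
  have "rev (take k z) \<noteq> []" "drop k z \<noteq> []"
    using assms(3,4) by auto
  moreover have "set (rev (take k z)) \<subseteq> {1..d}" "set (drop k z) \<subseteq> {1..d}"
    and "length (rev (take k z)) + length (drop k z) \<le> N"
    using assms(2,4) set_take_subset set_drop_subset unfolding words_def by fastforce+
  ultimately show ?thesis
    using assms(1) unfolding primitive_upto_def split_shuffle_def by blast
qed

(* The Lie element is sum_w x_w / |w| [w]: by left_bracket_coeff its coefficient at z is an
   alternating sum of pairings with split shuffles of z, where primitivity kills 0 < k < |z|
   and the weight |z| - k kills k = |z|. *)
theorem primitive_upto_imp_lieN:
  assumes "primitive_upto d N x"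
  shows "\<exists>y\<in>lieN d N. \<forall>z\<in>words d N. y z = x z"
proof -
  define l where "l = (\<lambda>z. \<Sum>w\<in>words d N. x w / real (length w) * left_bracket w z)"
  have "l \<in> lie d"
    unfolding l_def using finite_words left_bracket_in_lie by (rule sum_in_lie) (simp add: words_def)
  moreover have "l z = x z" if z: "z \<in> words d N" for z
  proof -
    have "pair (\<lambda>w. x w / real (length w)) (split_shuffle k z) = pair x (split_shuffle k z) / length z"
      if "k \<le> length z" for k
      using in_set_split_shuffle[OF that]
      by (simp add: pair_def divide_inverse sum_list_mult_const cong: map_cong)
    then have "l z = (\<Sum>k\<le>length z. (-1) ^ k * real (length z - k) / length z
        * pair x (split_shuffle k z))"
      unfolding l_def using split_shuffle_subset_words[OF z]
      by (subst sum_left_bracket_apply[OF finite_words]) (auto intro: sum.cong)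
    also have "\<dots> = (\<Sum>k\<le>length z. if k = 0 then x z else 0)"
    proof (intro sum.cong refl)
      fix k assume "k \<in> {..length z}"
      then consider "k = 0" | "0 < k" "k < length z" | "0 < k" "k = length z"
        by fastforce
      then show "(-1) ^ k * real (length z - k) / length z * pair x (split_shuffle k z)
          = (if k = 0 then x z else 0)"
      proof cases
        case 1
        then show ?thesis
          using assms by (cases "z = []") (auto simp: pair_def primitive_upto_def)
      qed (simp_all add: pair_split_shuffle_primitive[OF assms z])
    qed
    also have "\<dots> = x z" by simp
    finally show ?thesis .
  qed
  ultimately show ?thesis
    unfolding lieN_def by (intro bexI[of _ "proj N l"]) (auto simp: proj_def words_def)
qed

section \<open>Diagonal derivatives of N-sgrms\<close>

lemma smooth_on_has_vector_derivative:
  assumes "smooth_on S g" "s \<in> S"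
  shows "(g has_vector_derivative vector_derivative g (at s within S)) (at s within S)"
proof -
  obtain D where D: "\<forall>x\<in>S. D 0 x = g x"
    "\<forall>k. \<forall>x\<in>S. (D k has_vector_derivative D (Suc k) x) (at x within S)"
    using assms(1) unfolding smooth_on_def by blast
  have "(D 0 has_vector_derivative D (Suc 0) s) (at s within S)"
    using D(2) assms(2) by blast
  then have "(g has_vector_derivative D (Suc 0) s) (at s within S)"
    by (rule has_vector_derivative_transform[OF assms(2), rotated]) (simp add: D(1))
  then show ?thesis
    by (rule vector_derivative_works[THEN iffD1, OF differentiableI_vector])
qed

lemma has_vector_derivative_unique_on_interval:
  fixes f g :: "real \<Rightarrow> 'a::euclidean_space"
  assumes "a < b" "s \<in> {a..b}" "\<And>t. t \<in> {a..b} \<Longrightarrow> f t = g t"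
    and "(f has_vector_derivative f') (at s within {a..b})"
    and "(g has_vector_derivative g') (at s within {a..b})"
  shows "f' = g'"
proof -
  have "(f has_vector_derivative g') (at s within {a..b})"
    using assms(2,3,5) by (rule has_vector_derivative_transform)
  then show ?thesis
    using assms(1,2,4) by (metis vector_derivative_within_closed_interval)
qed

lemma has_vector_derivative_sum_list:
  "(\<And>u. u \<in> set L \<Longrightarrow> ((\<lambda>t. F t u) has_vector_derivative F' u) net) \<Longrightarrow>
   ((\<lambda>t. sum_list (map (F t) L)) has_vector_derivative sum_list (map F' L)) net"
proof (induction L)
  case Nil
  then show ?case by (simp add: has_vector_derivative_const)
next
  case (Cons a L)
  then show ?case by (simp add: has_vector_derivative_add)
qed

lemma Nsgrm_shuffle:
  assumes "Nsgrm d N T X" "s \<in> {0..T}" "t \<in> {0..T}"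
    and "set v \<subseteq> {1..d}" "set w \<subseteq> {1..d}" "length v + length w \<le> N"
  shows "pair (X s t) (shuffle v w) = X s t v * X s t w"
  using assms unfolding Nsgrm_def by blast

lemma Nsgrm_chen:
  assumes "Nsgrm d N T X" "s \<in> {0..T}" "u \<in> {0..T}" "t \<in> {0..T}"
  shows "tmulN N (X s u) (X u t) = X s t"
  using assms unfolding Nsgrm_def by blast

lemma Nsgrm_outside_words:
  assumes "Nsgrm d N T X" "s \<in> {0..T}" "t \<in> {0..T}" "w \<notin> words d N"
  shows "X s t w = 0"
  using assms unfolding Nsgrm_def in_TN_def by blast

lemma Nsgrm_smooth:
  assumes "Nsgrm d N T X" "s \<in> {0..T}"
  shows "smooth_on {0..T} (\<lambda>t. X s t w)"
  using assms unfolding Nsgrm_def by blast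

lemma Nsgrm_empty_word:
  assumes X: "Nsgrm d N T X" and "s \<in> {0..T}" "t \<in> {0..T}"
  shows "X s t [] = 1"
proof -
  have chen: "X a c [] = X a b [] * X b c []" if "a \<in> {0..T}" "b \<in> {0..T}" "c \<in> {0..T}" for a b c
    using Nsgrm_chen[OF X that, THEN fun_cong, of "[]"] by (simp add: tmulN_def)
  have unit: "X a b w = X a b [] * X a b w" if "a \<in> {0..T}" "b \<in> {0..T}" for a b w
  proof (cases "w \<in> words d N")
    case True
    then show ?thesis
      using Nsgrm_shuffle[OF X that, of "[]" w] by (simp add: words_def)
  qed (simp add: Nsgrm_outside_words[OF X that])
  obtain s0 t0 where st0: "s0 \<in> {0..T}" "t0 \<in> {0..T}" "X s0 t0 \<noteq> (\<lambda>w. 0)"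
    using X unfolding Nsgrm_def by blast
  have "X s0 t0 [] \<noteq> 0"
  proof
    assume "X s0 t0 [] = 0"
    then have "X s0 t0 = (\<lambda>w. 0)" using unit[OF st0(1,2)] by auto
    with st0(3) show False ..
  qed
  moreover have "X s0 t0 [] = X s0 s [] * X s t [] * X t t0 []"
    using chen[of s0 s t0] chen[of s t t0] st0 assms(2,3) by (simp add: mult.assoc)
  ultimately have "X s t [] \<noteq> 0" by auto
  moreover have "X s t [] = X s t [] * X s t []" using unit assms(2,3) by blast
  ultimately show ?thesis by simp
qed

lemma Nsgrm_diagonal:
  assumes X: "Nsgrm d N T X" and s: "s \<in> {0..T}"
  shows "w \<noteq> [] \<Longrightarrow> X s s w = 0"
proof (induction w rule: length_induct)
  case (1 w)
  show ?case
  proof (cases "w \<in> words d N")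
    case False
    then show ?thesis using Nsgrm_outside_words[OF X s s] by simp
  next
    case True
    have "X s s w = tmul (X s s) (X s s) w"
      using Nsgrm_chen[OF X s s s, THEN fun_cong, of w] True by (simp add: tmulN_def words_def)
    also have "\<dots> = (\<Sum>i\<le>length w. (if i = 0 then X s s w else 0) + (if i = length w then X s s w else 0))"
      unfolding tmul_def
    proof (intro sum.cong refl)
      fix i assume "i \<in> {..length w}"
      then consider "i = 0" | "i = length w" | "0 < i" "i < length w" by fastforce
      then show "X s s (take i w) * X s s (drop i w)
          = (if i = 0 then X s s w else 0) + (if i = length w then X s s w else 0)"
      proof cases
        case 3
        then have "X s s (take i w) = 0" using "1.prems" "1.IH"[rule_format, of "take i w"] by simp
        then show ?thesis using 3 by simp
      qed (use "1.prems" Nsgrm_empty_word[OF X s s] in auto)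
    qed
    also have "\<dots> = 2 * X s s w" using "1.prems" by (simp add: sum.distrib)
    finally show ?thesis by simp
  qed
qed

lemma Nsgrm_diag_deriv_primitive:
  assumes X: "Nsgrm d N T X" and T: "T > 0" and s: "s \<in> {0..T}"
  shows "primitive_upto d N (diag_deriv T X s)"
proof -
  let ?x = "diag_deriv T X s"
  have deriv: "((\<lambda>t. X s t w) has_vector_derivative ?x w) (at s within {0..T})" for w
    unfolding diag_deriv_def using Nsgrm_smooth[OF X s] s by (rule smooth_on_has_vector_derivative)
  have "?x [] = 0"
    by (rule has_vector_derivative_unique_on_interval[OF T s _ deriv has_vector_derivative_const])
      (simp add: Nsgrm_empty_word[OF X s])
  moreover have "pair ?x (shuffle v w) = 0"
    if "v \<noteq> []" "w \<noteq> []" "set v \<subseteq> {1..d}" "set w \<subseteq> {1..d}" "length v + length w \<le> N" for v w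
  proof -
    have "((\<lambda>t. pair (X s t) (shuffle v w)) has_vector_derivative pair ?x (shuffle v w))
        (at s within {0..T})"
      unfolding pair_def by (rule has_vector_derivative_sum_list) (rule deriv)
    moreover have "((\<lambda>t. X s t v * X s t w) has_vector_derivative X s s v * ?x w + ?x v * X s s w)
        (at s within {0..T})"
      by (rule has_vector_derivative_mult[OF deriv deriv])
    ultimately have "pair ?x (shuffle v w) = X s s v * ?x w + ?x v * X s s w"
      by (rule has_vector_derivative_unique_on_interval[OF T s, rotated])
        (simp add: Nsgrm_shuffle[OF X s _ that(3-5)])
    then show ?thesis using Nsgrm_diagonal[OF X s] that(1,2) by simp
  qed
  ultimately show ?thesis unfolding primitive_upto_def by blast
qed

section \<open>Expansion in an orthonormal basis\<close>

lemma onb_lieN_coeff: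
  assumes B: "onb_lieN d N B" and "y \<in> lieN d N" and y: "\<forall>w\<in>words d N. y w = x w"
    and w: "w \<in> words d N"
  shows "x w = (\<Sum>u\<in>B. ipN d N x u * u w)"
proof -
  have fin: "finite B" and orth: "\<And>u v. u \<in> B \<Longrightarrow> v \<in> B \<Longrightarrow> ipN d N u v = (if u = v then 1 else 0)"
    using B unfolding onb_lieN_def by blast+
  obtain c where c: "y = (\<lambda>w. \<Sum>u\<in>B. c u * u w)"
    using B \<open>y \<in> lieN d N\<close> unfolding onb_lieN_def by blast
  have "ipN d N x v = c v" if v: "v \<in> B" for v
  proof -
    have "ipN d N x v = ipN d N y v" unfolding ipN_def using y by simp
    also have "\<dots> = (\<Sum>u\<in>B. c u * ipN d N u v)"
      unfolding ipN_def c sum_distrib_right by (subst sum.swap) (simp add: sum_distrib_left ac_simps)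
    also have "\<dots> = (\<Sum>u\<in>B. if u = v then c u else 0)"
      using orth v by (intro sum.cong refl) simp
    also have "\<dots> = c v"
      using fin v by simp
    finally show ?thesis .
  qed
  then show ?thesis using y w unfolding c by simp
qed

lemma onb_lieN_sum_words:
  fixes F :: "nat list \<Rightarrow> 'a::real_vector"
  assumes "onb_lieN d N B" "y \<in> lieN d N" "\<forall>w\<in>words d N. y w = x w"
  shows "(\<Sum>w\<in>words d N. x w *\<^sub>R F w) = (\<Sum>u\<in>B. ipN d N x u *\<^sub>R (\<Sum>w\<in>words d N. u w *\<^sub>R F w))"
proof -
  have "(\<Sum>w\<in>words d N. x w *\<^sub>R F w) = (\<Sum>w\<in>words d N. \<Sum>u\<in>B. (ipN d N x u * u w) *\<^sub>R F w)"
    using onb_lieN_coeff[OF assms] by (intro sum.cong refl) (simp add: scaleR_sum_left)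
  also have "\<dots> = (\<Sum>u\<in>B. ipN d N x u *\<^sub>R (\<Sum>w\<in>words d N. u w *\<^sub>R F w))"
    by (subst sum.swap) (simp add: scaleR_sum_right)
  finally show ?thesis .
qed

theorem lemma2p21:
  fixes T :: real and d N :: nat
    and f :: "nat \<Rightarrow> 'e::euclidean_space \<Rightarrow> 'e"
    and X :: "real \<Rightarrow> real \<Rightarrow> nat list \<Rightarrow> real"
    and B :: "(nat list \<Rightarrow> real) set"
    and Y :: "real \<Rightarrow> 'e"
  assumes "T > 0" and "d \<ge> 1"
    and "\<forall>i\<in>{1..d}. smooth_bdd_field (f i)"
    and "Nsgrm d N T X \<or> (good_sgrm d T X \<and> (\<forall>s\<in>{0..T}. diag_deriv T X s \<in> lieN d N))"
    and "onb_lieN d N B"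
    and "smooth_on {0..T} Y"
  shows "solves T d N f X Y \<longleftrightarrow>
    (\<forall>s\<in>{0..T}. vector_derivative Y (at s within {0..T})
       = (\<Sum>u\<in>B. ipN d N (diag_deriv T X s) u *\<^sub>R fx f d N u (Y s)))"
proof -
  have "(\<Sum>w\<in>words d N. diag_deriv T X s w *\<^sub>R fw f w (Y s))
      = (\<Sum>u\<in>B. ipN d N (diag_deriv T X s) u *\<^sub>R fx f d N u (Y s))" if s: "s \<in> {0..T}" for s
  proof -
    have "\<exists>y\<in>lieN d N. \<forall>w\<in>words d N. y w = diag_deriv T X s w"
    proof (cases "Nsgrm d N T X")
      case True
      then show ?thesis by (rule primitive_upto_imp_lieN[OF Nsgrm_diag_deriv_primitive[OF _ assms(1) s]])
    qed (use assms(4) s in auto)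
    then obtain y where "y \<in> lieN d N" "\<forall>w\<in>words d N. y w = diag_deriv T X s w" ..
    then show ?thesis unfolding fx_def by (rule onb_lieN_sum_words[OF assms(5)])
  qed
  then show ?thesis
    unfolding solves_def using assms(6) by simp
qed

end
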